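(* Let $V$ be a finite-dimensional vector space, $\pi\in\wedge^2V$, and $V_1,V_2\subset V$ subspaces with $\pi(V_1^0,V_2^0)=0$. For $j=1,2$ let $\rho_j:V\to V/V_j$ be the projections. Assume $U\subset V$ is a subspace that is coisotropic with respect to $\pi$ and such that $\rho_1|_U:U\to V/V_1$ is an isomorphism, and let $\psi=\rho_2\circ(\rho_1|_U)^{-1}:V/V_1\to V/V_2$. Then $\psi(\rho_1(\pi))=-\rho_2(\pi)$ in $\wedge^2(V/V_2)$.
   Context: For a subspace $U_1\subset V$, $U_1^0=\{\xi\in V^*:\xi|_{U_1}=0\}$. $\pi(\xi,\eta)$ denotes the pairing of $\pi\in\wedge^2V$ with $\xi,\eta\in V^*$. For subspaces $U_1,U_2\subset V$, $U_1\wedge U_2=\wedge^2V\cap(U_1\otimes U_2+U_2\otimes U_1)$, and $U_1$ is coisotropic with respect to $\pi$ if $\pi\in U_1\wedge V$. Linear maps act on $\wedge^2$ in the induced way. *)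

theory Defs
  imports Main HOL.Modules "HOL-Library.Function_Algebras"
begin

text \<open>Coordinates: V = k^n realised as functions 'n => 'k with 'n finite.
 Elements of V*, also 'n => 'k, paired with V by the standard pairing.
 Tensors in V (x) V are functions 'n => 'n => 'k (coefficients w.r.t. e_i (x) e_j).\<close>

definition vsc :: "'k::field \<Rightarrow> ('n \<Rightarrow> 'k) \<Rightarrow> ('n \<Rightarrow> 'k)" where
  "vsc c v = (\<lambda>i. c * v i)"

definition tsc :: "'k::field \<Rightarrow> ('n \<Rightarrow> 'n \<Rightarrow> 'k) \<Rightarrow> ('n \<Rightarrow> 'n \<Rightarrow> 'k)" where
  "tsc c t = (\<lambda>i j. c * t i j)"

definition is_subspace :: "('n::finite \<Rightarrow> 'k::field) set \<Rightarrow> bool" where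
  "is_subspace S = module.subspace vsc S"

definition pair :: "('n::finite \<Rightarrow> 'k::field) \<Rightarrow> ('n \<Rightarrow> 'k) \<Rightarrow> 'k" where
  "pair \<xi> v = (\<Sum>i\<in>UNIV. \<xi> i * v i)"

definition annih :: "('n::finite \<Rightarrow> 'k::field) set \<Rightarrow> ('n \<Rightarrow> 'k) set" where
  "annih U = {\<xi>. \<forall>u\<in>U. pair \<xi> u = 0}"

definition bpair :: "('n::finite \<Rightarrow> 'n \<Rightarrow> 'k::field) \<Rightarrow> ('n \<Rightarrow> 'k) \<Rightarrow> ('n \<Rightarrow> 'k) \<Rightarrow> 'k" where
  "bpair p \<xi> \<eta> = (\<Sum>i\<in>UNIV. \<Sum>j\<in>UNIV. p i j * \<xi> i * \<eta> j)"

text \<open>wedge^2 V inside V (x) V: alternating tensors\<close>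
definition wedge2 :: "('n::finite \<Rightarrow> 'n \<Rightarrow> 'k::field) set" where
  "wedge2 = {p. \<forall>i j. p i j = - p j i \<and> p i i = 0}"

definition tens :: "('n \<Rightarrow> 'k::field) \<Rightarrow> ('n \<Rightarrow> 'k) \<Rightarrow> ('n \<Rightarrow> 'n \<Rightarrow> 'k)" where
  "tens u v = (\<lambda>i j. u i * v j)"

text \<open>U1 /\ U2 = wedge^2 V \<inter> (U1 (x) U2 + U2 (x) U1)\<close>
definition wedge_sub :: "('n::finite \<Rightarrow> 'k::field) set \<Rightarrow> ('n \<Rightarrow> 'k) set \<Rightarrow> ('n \<Rightarrow> 'n \<Rightarrow> 'k) set" where
  "wedge_sub U1 U2 = wedge2 \<inter>
     module.span tsc ({tens u v | u v. u \<in> U1 \<and> v \<in> U2} \<union> {tens v u | u v. u \<in> U1 \<and> v \<in> U2})"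

definition coisotropic :: "('n::finite \<Rightarrow> 'k::field) set \<Rightarrow> ('n \<Rightarrow> 'n \<Rightarrow> 'k) \<Rightarrow> bool" where
  "coisotropic U p \<longleftrightarrow> p \<in> wedge_sub U UNIV"

text \<open>Linear maps between coordinate spaces as matrices\<close>
definition app :: "('m \<Rightarrow> 'n::finite \<Rightarrow> 'k::field) \<Rightarrow> ('n \<Rightarrow> 'k) \<Rightarrow> ('m \<Rightarrow> 'k)" where
  "app A v = (\<lambda>i. \<Sum>j\<in>UNIV. A i j * v j)"

text \<open>induced action on 2-tensors (A (x) A)\<close>
definition app2 :: "('m \<Rightarrow> 'n::finite \<Rightarrow> 'k::field) \<Rightarrow> ('n \<Rightarrow> 'n \<Rightarrow> 'k) \<Rightarrow> ('m \<Rightarrow> 'm \<Rightarrow> 'k)" where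
  "app2 A p = (\<lambda>i j. \<Sum>a\<in>UNIV. \<Sum>b\<in>UNIV. A i a * A j b * p a b)"

text \<open>R represents the quotient projection V -> V/W: surjective with kernel W\<close>
definition is_quotient_map :: "('m \<Rightarrow> 'n::finite \<Rightarrow> 'k::field) \<Rightarrow> ('n \<Rightarrow> 'k) set \<Rightarrow> bool" where
  "is_quotient_map R W \<longleftrightarrow> surj (app R) \<and> {v. app R v = 0} = W"

end

theory Submission
  imports Defs
begin

text \<open>Let \<open>q\<close> be the projection of \<open>V\<close> onto \<open>U\<close> along \<open>V\<^sub>1\<close>, so that \<open>\<psi> \<circ> \<rho>\<^sub>1 = \<rho>\<^sub>2 \<circ> q\<close> and
  \<open>\<psi>(\<rho>\<^sub>1(\<pi>)) = \<rho>\<^sub>2(q(\<pi>))\<close>. Dually, \<open>q\<^sup>T\<close> maps \<open>V\<^sup>*\<close> into \<open>V\<^sub>1\<^sup>0\<close> and \<open>\<xi> - q\<^sup>T\<xi> \<in> U\<^sup>0\<close>.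
  Coisotropy means \<open>\<pi>(U\<^sup>0, U\<^sup>0) = 0\<close>; expanding \<open>\<pi>(\<alpha> - q\<^sup>T\<alpha>, \<beta> - q\<^sup>T\<beta>) = 0\<close> for
  \<open>\<alpha>, \<beta> \<in> V\<^sub>2\<^sup>0\<close> and using \<open>\<pi>(V\<^sub>1\<^sup>0, V\<^sub>2\<^sup>0) = 0\<close> with antisymmetry leaves
  \<open>\<pi>(q\<^sup>T\<alpha>, q\<^sup>T\<beta>) = -\<pi>(\<alpha>, \<beta>)\<close>, which is the claim evaluated on \<open>V\<^sub>2\<^sup>0 = (V/V\<^sub>2)\<^sup>*\<close>.\<close>

definition matmul :: "('m \<Rightarrow> 'l::finite \<Rightarrow> 'k::field) \<Rightarrow> ('l \<Rightarrow> 'n \<Rightarrow> 'k) \<Rightarrow> 'm \<Rightarrow> 'n \<Rightarrow> 'k" where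
  "matmul A B = (\<lambda>i c. \<Sum>a\<in>UNIV. A i a * B a c)"

definition mat_transpose :: "('m \<Rightarrow> 'n \<Rightarrow> 'k) \<Rightarrow> 'n \<Rightarrow> 'm \<Rightarrow> 'k" where
  "mat_transpose A = (\<lambda>i j. A j i)"

lemma module_vsc: "module (vsc :: 'k::field \<Rightarrow> ('n \<Rightarrow> 'k) \<Rightarrow> _)"
  unfolding module_def vsc_def by (auto simp: algebra_simps fun_eq_iff)

lemma module_tsc: "module (tsc :: 'k::field \<Rightarrow> ('n \<Rightarrow> 'n \<Rightarrow> 'k) \<Rightarrow> _)"
  unfolding module_def tsc_def by (auto simp: algebra_simps fun_eq_iff)

lemma app_zero [simp]: "app A 0 = 0"
  by (simp add: app_def fun_eq_iff)

lemma app_basis: "app A (\<lambda>j. if j = c then 1 else 0) = (\<lambda>i. A i c)"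
  unfolding app_def by (simp add: fun_eq_iff if_distrib[of "(*) _"] sum.delta cong: if_cong)

lemma matrix_eqI:
  assumes "\<And>v. app A v = app B v"
  shows "A = B"
proof (intro ext)
  fix i c
  show "A i c = B i c"
    using assms[of "\<lambda>j. if j = c then 1 else 0"] by (simp add: app_basis fun_eq_iff)
qed

lemma app_matmul: "app (matmul A B) v = app A (app B v)"
  unfolding app_def matmul_def fun_eq_iff sum_distrib_left sum_distrib_right
  by (intro allI, subst sum.swap) (simp add: mult_ac)

lemma matmul_row: "matmul A B i = app (mat_transpose B) (A i)"
  unfolding matmul_def mat_transpose_def app_def by (simp add: fun_eq_iff mult.commute)

lemma pair_app_transpose: "pair (app (mat_transpose A) \<xi>) v = pair \<xi> (app A v)"
  unfolding pair_def app_def mat_transpose_def sum_distrib_left sum_distrib_right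
  by (subst sum.swap) (simp add: mult_ac)

lemma pair_diff_left: "pair (\<xi> - \<eta>) v = pair \<xi> v - pair \<eta> v"
  unfolding pair_def by (simp add: algebra_simps sum_subtractf)

lemma app2_eq_bpair: "app2 A p i j = bpair p (A i) (A j)"
  unfolding app2_def bpair_def by (simp add: mult_ac)

lemma bpair_app2:
  "bpair (app2 B p) \<xi> \<eta> = bpair p (app (mat_transpose B) \<xi>) (app (mat_transpose B) \<eta>)"
proof -
  have "bpair (app2 B p) \<xi> \<eta> = (\<Sum>i\<in>UNIV. \<Sum>j\<in>UNIV. \<Sum>a\<in>UNIV. \<Sum>b\<in>UNIV. p a b * (B i a * \<xi> i) * (B j b * \<eta> j))"
    unfolding bpair_def app2_def by (simp add: sum_distrib_left sum_distrib_right mult_ac)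
  also have "\<dots> = (\<Sum>i\<in>UNIV. \<Sum>a\<in>UNIV. \<Sum>j\<in>UNIV. \<Sum>b\<in>UNIV. p a b * (B i a * \<xi> i) * (B j b * \<eta> j))"
    by (intro sum.cong refl sum.swap)
  also have "\<dots> = (\<Sum>a\<in>UNIV. \<Sum>i\<in>UNIV. \<Sum>b\<in>UNIV. \<Sum>j\<in>UNIV. p a b * (B i a * \<xi> i) * (B j b * \<eta> j))"
    by (subst sum.swap) (intro sum.cong refl sum.swap)
  also have "\<dots> = (\<Sum>a\<in>UNIV. \<Sum>b\<in>UNIV. \<Sum>i\<in>UNIV. \<Sum>j\<in>UNIV. p a b * (B i a * \<xi> i) * (B j b * \<eta> j))"
    by (intro sum.cong refl sum.swap)
  also have "\<dots> = bpair p (app (mat_transpose B) \<xi>) (app (mat_transpose B) \<eta>)"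
    unfolding bpair_def app_def mat_transpose_def
    by (simp add: sum_distrib_left sum_distrib_right mult_ac)
  finally show ?thesis .
qed

lemma app2_app2: "app2 A (app2 B p) = app2 (matmul A B) p"
  by (simp add: fun_eq_iff app2_eq_bpair bpair_app2 matmul_row)

lemma bpair_diff_left: "bpair p (x - y) z = bpair p x z - bpair p y z"
  unfolding bpair_def by (simp add: algebra_simps sum_subtractf)

lemma bpair_diff_right: "bpair p z (x - y) = bpair p z x - bpair p z y"
  unfolding bpair_def by (simp add: algebra_simps sum_subtractf)

lemma bpair_antisym:
  assumes "p \<in> wedge2"
  shows "bpair p x y = - bpair p y x"
proof -
  have "bpair p x y = (\<Sum>j\<in>UNIV. \<Sum>i\<in>UNIV. p i j * x i * y j)"
    unfolding bpair_def by (rule sum.swap)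
  also have "\<dots> = (\<Sum>j\<in>UNIV. \<Sum>i\<in>UNIV. - (p j i * y j * x i))"
  proof (intro sum.cong refl)
    fix i j
    have "p i j = - p j i"
      using assms unfolding wedge2_def by blast
    then show "p i j * x i * y j = - (p j i * y j * x i)"
      by (simp add: mult_ac)
  qed
  finally show ?thesis
    unfolding bpair_def by (simp add: sum_negf)
qed

lemma bpair_tens: "bpair (tens u v) \<xi> \<eta> = pair \<xi> u * pair \<eta> v"
  unfolding bpair_def tens_def pair_def sum_product by (simp add: mult_ac)

lemma coisotropic_bpair_annih:
  fixes p :: "'n::finite \<Rightarrow> 'n \<Rightarrow> 'k::field"
  assumes "coisotropic U p" and "\<xi> \<in> annih U" and "\<eta> \<in> annih U"
  shows "bpair p \<xi> \<eta> = 0"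
proof -
  interpret T: module "tsc :: 'k \<Rightarrow> ('n \<Rightarrow> 'n \<Rightarrow> 'k) \<Rightarrow> _" by (rule module_tsc)
  have "p \<in> T.span ({tens u v | u v. u \<in> U \<and> v \<in> UNIV} \<union> {tens v u | u v. u \<in> U \<and> v \<in> UNIV})"
    using assms(1) unfolding coisotropic_def wedge_sub_def by blast
  then show ?thesis
  proof (induct rule: T.span_induct_alt)
    case base
    show ?case by (simp add: bpair_def)
  next
    case (step c x y)
    have "bpair x \<xi> \<eta> = 0"
      using step(1) assms(2,3) by (auto simp: bpair_tens annih_def)
    have "bpair (tsc c x + y) \<xi> \<eta> = c * bpair x \<xi> \<eta> + bpair y \<xi> \<eta>"
      unfolding bpair_def tsc_def by (simp add: sum.distrib sum_distrib_left algebra_simps)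
    also have "\<dots> = 0"
      using \<open>bpair x \<xi> \<eta> = 0\<close> step(2) by simp
    finally show ?case .
  qed
qed

lemma quotient_map_row_annih:
  assumes "is_quotient_map R W"
  shows "R i \<in> annih W"
  using assms unfolding is_quotient_map_def annih_def app_def pair_def by (auto simp: fun_eq_iff)

lemma sum_fun_apply: "sum f A x = (\<Sum>a\<in>A. f a x)"
  by (induct A rule: infinite_finite_induct) auto

lemma app_in_subspace:
  fixes A :: "'n::finite \<Rightarrow> 'm::finite \<Rightarrow> 'k::field"
  assumes "is_subspace U" and "\<And>c. (\<lambda>k. A k c) \<in> U"
  shows "app A v \<in> U"
proof -
  interpret M: module "vsc :: 'k \<Rightarrow> ('n \<Rightarrow> 'k) \<Rightarrow> _" by (rule module_vsc)
  have "(\<Sum>c\<in>UNIV. vsc (v c) (\<lambda>k. A k c)) \<in> U"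
    using assms(1) unfolding is_subspace_def
    by (intro M.subspace_sum M.subspace_scale assms(2))
  moreover have "(\<Sum>c\<in>UNIV. vsc (v c) (\<lambda>k. A k c)) = app A v"
    unfolding app_def vsc_def by (auto simp: fun_eq_iff sum_fun_apply mult.commute)
  ultimately show ?thesis by simp
qed

lemma exists_section_in_subspace:
  assumes "is_subspace U" and "app R ` U = UNIV"
  obtains Q where "\<And>v. app Q v \<in> U" and "matmul R Q = R"
proof -
  have "\<forall>c. \<exists>u\<in>U. app R u = (\<lambda>i. R i c)"
    using assms(2) by (metis UNIV_I imageE)
  then obtain w where w: "\<And>c. w c \<in> U" "\<And>c. app R (w c) = (\<lambda>i. R i c)"
    by metis
  define Q where "Q k c = w c k" for k c
  have "app Q v \<in> U" for v
    by (rule app_in_subspace[OF assms(1)]) (simp add: Q_def w(1))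
  moreover have "matmul R Q = R"
  proof (intro ext)
    fix i c
    have "matmul R Q i c = app R (w c) i"
      by (simp add: matmul_def app_def Q_def)
    then show "matmul R Q i c = R i c"
      by (simp add: w(2))
  qed
  ultimately show thesis
    by (rule that)
qed

lemma section_is_projection:
  assumes "inj_on (app R) U" and "0 \<in> U" and "\<And>v. app Q v \<in> U" and "matmul R Q = R"
  shows "\<And>u. u \<in> U \<Longrightarrow> app Q u = u" and "\<And>v. app R v = 0 \<Longrightarrow> app Q v = 0"
proof -
  have RQ: "app R (app Q v) = app R v" for v
    by (metis assms(4) app_matmul)
  show "app Q u = u" if "u \<in> U" for u
    using inj_onD[OF assms(1) RQ assms(3) that] .
  show "app Q v = 0" if "app R v = 0" for v
    using inj_onD[OF assms(1) _ assms(3) assms(2)] RQ[of v] that by simp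
qed

lemma transpose_projection_annih:
  assumes "\<And>u. u \<in> U \<Longrightarrow> app Q u = u" and "\<And>w. w \<in> W \<Longrightarrow> app Q w = 0"
  shows "app (mat_transpose Q) \<xi> \<in> annih W" and "\<xi> - app (mat_transpose Q) \<xi> \<in> annih U"
proof -
  show "app (mat_transpose Q) \<xi> \<in> annih W"
    using assms(2) by (simp add: annih_def pair_app_transpose, simp add: pair_def)
  have "pair (\<xi> - app (mat_transpose Q) \<xi>) u = pair \<xi> u - pair \<xi> (app Q u)" for u
    by (simp add: pair_diff_left pair_app_transpose)
  then show "\<xi> - app (mat_transpose Q) \<xi> \<in> annih U"
    using assms(1) by (simp add: annih_def)
qed

lemma bpair_transpose_projection:
  assumes p: "p \<in> wedge2" and cois: "coisotropic U p"
    and orth: "\<forall>\<xi>\<in>annih W. \<forall>\<eta>\<in>annih V. bpair p \<xi> \<eta> = 0"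
    and QW: "\<And>\<xi>. app (mat_transpose Q) \<xi> \<in> annih W"
    and QU: "\<And>\<xi>. \<xi> - app (mat_transpose Q) \<xi> \<in> annih U"
    and \<alpha>: "\<alpha> \<in> annih V" and \<beta>: "\<beta> \<in> annih V"
  shows "bpair p (app (mat_transpose Q) \<alpha>) (app (mat_transpose Q) \<beta>) = - bpair p \<alpha> \<beta>"
proof -
  let ?q = "app (mat_transpose Q)"
  have "bpair p (\<alpha> - ?q \<alpha>) (\<beta> - ?q \<beta>) = 0"
    using coisotropic_bpair_annih[OF cois QU QU] .
  moreover have "bpair p (?q \<alpha>) \<beta> = 0"
    using orth QW \<beta> by blast
  moreover have "bpair p \<alpha> (?q \<beta>) = 0"
    using orth QW \<alpha> bpair_antisym[OF p] by (metis neg_equal_0_iff_equal)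
  ultimately show ?thesis
    by (simp add: bpair_diff_left bpair_diff_right eq_neg_iff_add_eq_0 add.commute)
qed

theorem lemmaA2:
  fixes p :: "'n::finite \<Rightarrow> 'n \<Rightarrow> 'k::field"
    and V1 V2 U :: "('n \<Rightarrow> 'k) set"
    and R1 :: "'m1::finite \<Rightarrow> 'n \<Rightarrow> 'k"
    and R2 :: "'m2::finite \<Rightarrow> 'n \<Rightarrow> 'k"
    and P :: "'m2 \<Rightarrow> 'm1 \<Rightarrow> 'k"
  assumes p: "p \<in> wedge2"
    and V1: "is_subspace V1" and V2: "is_subspace V2"
    and orth: "\<forall>\<xi>\<in>annih V1. \<forall>\<eta>\<in>annih V2. bpair p \<xi> \<eta> = 0"
    and R1: "is_quotient_map R1 V1" and R2: "is_quotient_map R2 V2"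
    and U: "is_subspace U" and cois: "coisotropic U p"
    and iso: "bij_betw (app R1) U UNIV"
    and psi: "\<forall>u\<in>U. app P (app R1 u) = app R2 u"
  shows "app2 P (app2 R1 p) = - app2 R2 p"
  \<comment> \<open>\<open>V1\<close> and \<open>V2\<close> are kernels of \<open>R1\<close> and \<open>R2\<close>.\<close>
proof -
  have inj: "inj_on (app R1) U" and onto: "app R1 ` U = UNIV"
    using iso by (auto simp: bij_betw_def)
  obtain Q where QU: "\<And>v. app Q v \<in> U" and R1Q: "matmul R1 Q = R1"
    using exists_section_in_subspace[OF U onto] by blast
  \<comment> \<open>\<open>Q\<close> is the matrix of the projection \<open>q\<close> onto \<open>U\<close> along \<open>V1\<close>.\<close>
  have "0 \<in> U"
    using U module.subspace_0[OF module_vsc] by (simp add: is_subspace_def)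
  note proj = section_is_projection[OF inj this QU R1Q]
  have Q_zero: "app Q v = 0" if "v \<in> V1" for v
    using proj(2) R1 that unfolding is_quotient_map_def by blast
  note Q_transpose = transpose_projection_annih[of U Q V1, OF proj(1) Q_zero]
  have PR1: "matmul P R1 = matmul R2 Q"
    by (rule matrix_eqI) (metis app_matmul R1Q QU psi)
  have "app2 P (app2 R1 p) i j = - app2 R2 p i j" for i j
  proof -
    have "app2 P (app2 R1 p) i j = bpair p (matmul R2 Q i) (matmul R2 Q j)"
      by (simp add: app2_app2 app2_eq_bpair PR1)
    also have "\<dots> = - bpair p (R2 i) (R2 j)"
      unfolding matmul_row
      using bpair_transpose_projection[OF p cois orth Q_transpose] quotient_map_row_annih[OF R2]
      by blast
    finally show ?thesis
      by (simp add: app2_eq_bpair)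
  qed
  then show ?thesis
    by (simp add: fun_eq_iff)
qed

end
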